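(* Let $q=(V_q,E_q,L_q)$ and $H=(V_H,E_H,L_H)$ be hypergraphs, fix an injection $pos:E_q\to\{0,1,\dots,|E_q|-1\}$, let $E'\subseteq E_q$, let $M:E'\to E_H$ be a partial embedding of the partial query $q'$ with hyperedge set $E'$, let $e\in E_q\setminus E'$ and $f\in E_H$, and put $M'=M\cup\{(e,f)\}$ (a map $E'\cup\{e\}\to E_H$). Suppose that for every integer $b$ whose binary representation has bit $pos(e)$ equal to $1$ and every label $l\in\Sigma$, $\mathcal{I}_q^{M'}(b,l)=\mathcal{I}_H^{M'}(b,l)$. Then $f$ is $M$-compatible for $e$, i.e., $M'$ is a partial embedding of the partial query with hyperedge set $E'\cup\{e\}$.
   Context: A (vertex-labeled) hypergraph is a triple $H=(V,E,L)$ where $V$ is a finite set, $E$ is a set of non-empty subsets of $V$ (hyperedges, no repeated hyperedges) with $\bigcup_{e\in E}e=V$, and $L:V\to\Sigma$ assigns each vertex a label. For $E'\subseteq E_q$ the partial query is $q'=(\bigcup_{e\in E'}e,E',L_q)$; a map $M:E'\to E_H$ is a partial embedding if there exists an injective label-preserving $\phi:\bigcup_{e\in E'}e\to V_H$ with $\{\phi(u):u\in e\}=M(e)$ for all $e\in E'$. For $F=E'\cup\{e\}$ and $M'$ as in the claim, the incident hyperedge bitmaps are $b_q^{M'}(u)=\sum_{g\in F,\,u\in g}2^{pos(g)}$ for $u\in\bigcup_{g\in F}g$, and $b_H^{M'}(v)=\sum_{g\in F,\,v\in M'(g)}2^{pos(g)}$ for $v\in\bigcup_{g\in F}M'(g)$.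 The cell signatures are $\mathcal{I}_q^{M'}(b,l)=|\{u\in\bigcup_{g\in F}g : b_q^{M'}(u)=b,\ L_q(u)=l\}|$ and $\mathcal{I}_H^{M'}(b,l)=|\{v\in\bigcup_{g\in F}M'(g) : b_H^{M'}(v)=b,\ L_H(v)=l\}|$. A data hyperedge $f$ is $M$-compatible for an unmapped query hyperedge $e$ if $M\cup\{(e,f)\}$ is a partial embedding for the partial query with hyperedge set $E'\cup\{e\}$. *)

theory Defs
  imports Main
begin

text \<open>Labels are given by a total
  function L into the label type (the alphabet Sigma).\<close>
definition hypergraph :: "'v set \<Rightarrow> 'v set set \<Rightarrow> ('v \<Rightarrow> 'l) \<Rightarrow> bool" where
  "hypergraph V E L \<longleftrightarrow> finite V \<and> (\<forall>e\<in>E. e \<noteq> {}) \<and> \<Union>E = V"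

text \<open>M : E' -> E_H is a partial embedding of the partial query q' = (\<Union>E', E', Lq)
  into the data hypergraph with hyperedges EH and labels LH.\<close>
definition partial_embedding ::
  "'a set set \<Rightarrow> ('a \<Rightarrow> 'l) \<Rightarrow> 'b set set \<Rightarrow> ('b \<Rightarrow> 'l) \<Rightarrow> ('a set \<Rightarrow> 'b set) \<Rightarrow> bool" where
  "partial_embedding E' Lq EH LH M \<longleftrightarrow>
     (\<forall>g\<in>E'. M g \<in> EH) \<and>
     (\<exists>\<phi>. inj_on \<phi> (\<Union>E') \<and> (\<forall>u\<in>\<Union>E'. LH (\<phi> u) = Lq u) \<and> (\<forall>g\<in>E'. \<phi> ` g = M g))"

definition bitmap_q :: "('a set \<Rightarrow> nat) \<Rightarrow> 'a set set \<Rightarrow> 'a \<Rightarrow> nat" where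
  "bitmap_q pos F u = (\<Sum>g\<in>{g\<in>F. u \<in> g}. 2 ^ pos g)"

definition bitmap_H :: "('a set \<Rightarrow> nat) \<Rightarrow> 'a set set \<Rightarrow> ('a set \<Rightarrow> 'b set) \<Rightarrow> 'b \<Rightarrow> nat" where
  "bitmap_H pos F M' v = (\<Sum>g\<in>{g\<in>F. v \<in> M' g}. 2 ^ pos g)"

definition cell_q :: "('a set \<Rightarrow> nat) \<Rightarrow> 'a set set \<Rightarrow> ('a \<Rightarrow> 'l) \<Rightarrow> nat \<Rightarrow> 'l \<Rightarrow> nat" where
  "cell_q pos F Lq b l = card {u \<in> \<Union>F. bitmap_q pos F u = b \<and> Lq u = l}"

definition cell_H ::
  "('a set \<Rightarrow> nat) \<Rightarrow> 'a set set \<Rightarrow> ('a set \<Rightarrow> 'b set) \<Rightarrow> ('b \<Rightarrow> 'l) \<Rightarrow> nat \<Rightarrow> 'l \<Rightarrow> nat" where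
  "cell_H pos F M' LH b l = card {v \<in> \<Union>(M' ` F). bitmap_H pos F M' v = b \<and> LH v = l}"

end

theory Submission
  imports Defs "HOL-Library.Nat_Bijection" "HOL-Library.Disjoint_Sets"
begin

text \<open>Since pos is injective, a bitmap determines the set
  of incident hyperedges, so a cell signature counts the vertices with a given incidence set and
  label; the query side is the instance M = id of the data side. Cells whose incidence set
  contains e agree by hypothesis. The cell of S \<subseteq> E' is the old cell of S for E' minus the
  vertices of e (resp. f), and these removed vertices form the cell of S \<union> {e}; the old cells
  have equal size because the embedding of E' maps one onto the other. So all cells agree in
  size, and gluing bijections between corresponding cells yields a label-preserving bijection
  that respects incidences, i.e. an embedding of E' \<union> {e}.\<close>

definition incidence_signature ::
  "'a set set \<Rightarrow> ('a set \<Rightarrow> 'b set) \<Rightarrow> ('b \<Rightarrow> 'l) \<Rightarrow> 'b \<Rightarrow> 'a set set \<times> 'l" where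
  "incidence_signature F M L v = ({g \<in> F. v \<in> M g}, L v)"

definition signature_class ::
  "'a set set \<Rightarrow> ('a set \<Rightarrow> 'b set) \<Rightarrow> ('b \<Rightarrow> 'l) \<Rightarrow> 'a set set \<times> 'l \<Rightarrow> 'b set" where
  "signature_class F M L k = {v \<in> \<Union>(M ` F). incidence_signature F M L v = k}"

lemma hypergraph_finite_Union:
  assumes "hypergraph V E L" "F \<subseteq> E"
  shows "finite (\<Union>F)"
  using assms unfolding hypergraph_def by (meson Union_mono finite_subset)

lemma hypergraph_finite_edges:
  assumes "hypergraph V E L"
  shows "finite E"
  using assms unfolding hypergraph_def by (metis finite_UnionD)

lemma sum_pow2_eq_set_encode:
  assumes "inj_on pos S"
  shows "(\<Sum>g\<in>S. (2::nat) ^ pos g) = set_encode (pos ` S)"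
  using assms by (simp add: set_encode_def sum.reindex)

lemma sum_pow2_eq_iff:
  assumes "inj_on pos F" "finite F" "S \<subseteq> F" "T \<subseteq> F"
  shows "(\<Sum>g\<in>S. (2::nat) ^ pos g) = (\<Sum>g\<in>T. 2 ^ pos g) \<longleftrightarrow> S = T"
proof -
  have "finite S" "finite T" "inj_on pos S" "inj_on pos T"
    using assms finite_subset inj_on_subset by metis+
  then have "(\<Sum>g\<in>S. (2::nat) ^ pos g) = (\<Sum>g\<in>T. 2 ^ pos g) \<longleftrightarrow> pos ` S = pos ` T"
    by (simp add: sum_pow2_eq_set_encode set_encode_eq)
  also have "\<dots> \<longleftrightarrow> S = T"
    using inj_on_image_eq_iff[OF assms(1,3,4)] .
  finally show ?thesis .
qed

lemma bit_sum_pow2_iff: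
  assumes "inj_on pos F" "finite F" "S \<subseteq> F" "x \<in> F"
  shows "bit (\<Sum>g\<in>S. (2::nat) ^ pos g) (pos x) \<longleftrightarrow> x \<in> S"
proof -
  have "finite S" "inj_on pos S"
    using assms finite_subset inj_on_subset by metis+
  then have "bit (\<Sum>g\<in>S. (2::nat) ^ pos g) (pos x) \<longleftrightarrow> pos x \<in> set_decode (set_encode (pos ` S))"
    by (simp add: sum_pow2_eq_set_encode set_decode_def bit_iff_odd)
  also have "\<dots> \<longleftrightarrow> pos x \<in> pos ` S"
    using \<open>finite S\<close> by simp
  also have "\<dots> \<longleftrightarrow> x \<in> S"
    using inj_on_image_mem_iff[OF assms(1,4,3)] .
  finally show ?thesis .
qed

lemma cell_q_eq_cell_H_id: "cell_q pos F Lq = cell_H pos F id Lq"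
  by (simp add: fun_eq_iff cell_q_def cell_H_def bitmap_q_def bitmap_H_def)

lemma cell_H_sum_pow2:
  assumes "inj_on pos F" "finite F" "S \<subseteq> F"
  shows "cell_H pos F M L (\<Sum>g\<in>S. 2 ^ pos g) l = card (signature_class F M L (S, l))"
proof -
  have "bitmap_H pos F M v = (\<Sum>g\<in>S. 2 ^ pos g) \<longleftrightarrow> {g \<in> F. v \<in> M g} = S" for v
    unfolding bitmap_H_def by (rule sum_pow2_eq_iff[OF assms(1,2) _ assms(3)]) blast
  then show ?thesis
    by (simp add: cell_H_def signature_class_def incidence_signature_def)
qed

lemma card_signature_class_eq_if_cells_eq:
  assumes "inj_on pos F" "finite F" "S \<subseteq> F" "x \<in> S"
    and "\<forall>(b::nat) l. bit b (pos x) \<longrightarrow> cell_q pos F Lq b l = cell_H pos F M LH b l"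
  shows "card (signature_class F id Lq (S, l)) = card (signature_class F M LH (S, l))"
proof -
  have "bit (\<Sum>g\<in>S. (2::nat) ^ pos g) (pos x)"
    using bit_sum_pow2_iff[OF assms(1-3)] assms(3,4) by blast
  then have "cell_H pos F id Lq (\<Sum>g\<in>S. 2 ^ pos g) l = cell_H pos F M LH (\<Sum>g\<in>S. 2 ^ pos g) l"
    using assms(5) by (simp add: cell_q_eq_cell_H_id)
  then show ?thesis
    by (simp only: cell_H_sum_pow2[OF assms(1-3)])
qed

lemma signature_class_eq_empty:
  assumes "S = {} \<or> \<not> S \<subseteq> F"
  shows "signature_class F M L (S, l) = {}"
  using assms by (auto simp: signature_class_def incidence_signature_def)

lemma mem_signature_class:
  assumes "S \<noteq> {}"
  shows "v \<in> signature_class F M L (S, l) \<longleftrightarrow> {g \<in> F. v \<in> M g} = S \<and> L v = l"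
  using assms by (auto simp: signature_class_def incidence_signature_def)

lemma incidences_fun_upd:
  assumes "e \<notin> E'"
  shows "{g \<in> insert e E'. v \<in> (M(e := f)) g} =
           (if v \<in> f then insert e {g \<in> E'. v \<in> M g} else {g \<in> E'. v \<in> M g})"
  using assms by auto

lemma signature_class_insert_old:
  assumes "e \<notin> E'" "S \<subseteq> E'" "S \<noteq> {}"
  shows "signature_class (insert e E') (M(e := f)) L (S, l) = signature_class E' M L (S, l) - f"
proof (rule set_eqI)
  fix v
  have "insert e T \<noteq> S" for T
    using assms(1,2) by blast
  then show "v \<in> signature_class (insert e E') (M(e := f)) L (S, l) \<longleftrightarrow>
               v \<in> signature_class E' M L (S, l) - f"
    unfolding mem_signature_class[OF assms(3)] incidences_fun_upd[OF assms(1)]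
    by (simp add: mem_signature_class[OF assms(3)])
qed

lemma signature_class_insert_new:
  assumes "e \<notin> E'" "S \<subseteq> E'" "S \<noteq> {}"
  shows "signature_class (insert e E') (M(e := f)) L (insert e S, l) =
           signature_class E' M L (S, l) \<inter> f"
proof (rule set_eqI)
  fix v
  have e_notin: "e \<notin> {g \<in> E'. v \<in> M g}" "e \<notin> S"
    using assms(1,2) by auto
  then have "insert e {g \<in> E'. v \<in> M g} = insert e S \<longleftrightarrow> {g \<in> E'. v \<in> M g} = S"
    by (rule insert_ident)
  moreover have "{g \<in> E'. v \<in> M g} \<noteq> insert e S"
    using e_notin(1) by blast
  ultimately show "v \<in> signature_class (insert e E') (M(e := f)) L (insert e S, l) \<longleftrightarrow>
               v \<in> signature_class E' M L (S, l) \<inter> f"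
    unfolding mem_signature_class[OF assms(3)] mem_signature_class[OF insert_not_empty]
      incidences_fun_upd[OF assms(1)]
    by (simp add: mem_signature_class[OF assms(3)])
qed

lemma bij_betw_signature_class_embedding:
  assumes "partial_embedding E' Lq EH LH M"
  shows "\<exists>\<phi>. bij_betw \<phi> (signature_class E' id Lq k) (signature_class E' M LH k)"
proof -
  obtain \<phi> where \<phi>: "inj_on \<phi> (\<Union>E')" "\<forall>u\<in>\<Union>E'. LH (\<phi> u) = Lq u" "\<forall>g\<in>E'. \<phi> ` g = M g"
    using assms unfolding partial_embedding_def by (elim conjE exE) blast
  have signature: "incidence_signature E' M LH (\<phi> u) = incidence_signature E' id Lq u"
    if "u \<in> \<Union>E'" for u
  proof -
    have "\<phi> u \<in> M g \<longleftrightarrow> u \<in> g" if "g \<in> E'" for g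
    proof -
      have "g \<subseteq> \<Union>E'" "M g = \<phi> ` g"
        using \<phi>(3) that by auto
      then show ?thesis
        using inj_on_image_mem_iff[OF \<phi>(1) \<open>u \<in> \<Union>E'\<close>] by simp
    qed
    then show ?thesis
      using \<phi>(2) that by (auto simp: incidence_signature_def)
  qed
  have "M ` E' = image \<phi> ` E'"
    using \<phi>(3) by (intro image_cong) auto
  then have "\<Union>(M ` E') = \<phi> ` \<Union>E'"
    by (simp add: image_Union)
  then have "signature_class E' M LH k = {v \<in> \<phi> ` \<Union>E'. incidence_signature E' M LH v = k}"
    by (simp add: signature_class_def)
  also have "\<dots> = \<phi> ` signature_class E' id Lq k"
    using signature by (force simp: signature_class_def)
  finally have "signature_class E' M LH k = \<phi> ` signature_class E' id Lq k" .
  moreover have "inj_on \<phi> (signature_class E' id Lq k)"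
    using \<phi>(1) by (rule inj_on_subset) (auto simp: signature_class_def)
  ultimately show ?thesis
    by (auto simp: bij_betw_def)
qed

lemma card_signature_class_insert_old:
  assumes "partial_embedding E' Lq EH LH M" "e \<notin> E'" "finite (\<Union>E')" "S \<subseteq> E'" "S \<noteq> {}"
    and "card (signature_class (insert e E') id Lq (insert e S, l)) =
      card (signature_class (insert e E') (M(e := f)) LH (insert e S, l))"
  shows "card (signature_class (insert e E') id Lq (S, l)) =
           card (signature_class (insert e E') (M(e := f)) LH (S, l))"
proof -
  define A where "A = signature_class E' id Lq (S, l)"
  define B where "B = signature_class E' M LH (S, l)"
  have id_upd: "id(e := e) = id"
    by (simp add: fun_eq_iff)
  have q_old: "signature_class (insert e E') id Lq (S, l) = A - e"
    and q_new: "signature_class (insert e E') id Lq (insert e S, l) = A \<inter> e"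
    using signature_class_insert_old[OF assms(2,4,5), of id e Lq l]
      signature_class_insert_new[OF assms(2,4,5), of id e Lq l]
    by (simp_all add: A_def id_upd)
  have H_old: "signature_class (insert e E') (M(e := f)) LH (S, l) = B - f"
    and H_new: "signature_class (insert e E') (M(e := f)) LH (insert e S, l) = B \<inter> f"
    unfolding B_def by (rule signature_class_insert_old[OF assms(2,4,5)]
        signature_class_insert_new[OF assms(2,4,5)])+
  have "finite A"
    using assms(3) by (rule finite_subset[rotated]) (auto simp: A_def signature_class_def)
  moreover obtain \<phi> where "bij_betw \<phi> A B"
    using bij_betw_signature_class_embedding[OF assms(1)] unfolding A_def B_def by blast
  ultimately have "finite B" "card A = card B"
    using bij_betw_finite bij_betw_same_card by blast+
  moreover have "card (A \<inter> e) = card (B \<inter> f)"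
    using assms(6) unfolding q_new H_new .
  ultimately show ?thesis
    using \<open>finite A\<close> by (simp add: q_old H_old card_Diff_subset_Int)
qed

lemma card_signature_class_extension:
  assumes "partial_embedding E' Lq EH LH M" "e \<notin> E'" "finite (\<Union>E')"
    and new: "\<And>S l. S \<subseteq> insert e E' \<Longrightarrow> e \<in> S \<Longrightarrow>
      card (signature_class (insert e E') id Lq (S, l)) =
      card (signature_class (insert e E') (M(e := f)) LH (S, l))"
  shows "card (signature_class (insert e E') id Lq k) =
           card (signature_class (insert e E') (M(e := f)) LH k)"
proof -
  obtain S l where k: "k = (S, l)"
    by fastforce
  consider "S = {} \<or> \<not> S \<subseteq> insert e E'" | "S \<subseteq> insert e E'" "e \<in> S" | "S \<subseteq> E'" "S \<noteq> {}"
    by blast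
  then show ?thesis
  proof cases
    case 1
    then show ?thesis
      by (simp add: k signature_class_eq_empty)
  next
    case 2
    then show ?thesis
      using new k by simp
  next
    case 3
    then have "insert e S \<subseteq> insert e E'"
      by blast
    then show ?thesis
      using card_signature_class_insert_old[OF assms(1-3) 3 new[OF _ insertI1]] k by simp
  qed
qed

lemma bij_betw_preserving_fibers:
  assumes "finite U" "finite W" "\<And>k. card {u \<in> U. s u = k} = card {v \<in> W. t v = k}"
  obtains \<psi> where "bij_betw \<psi> U W" "\<forall>u\<in>U. t (\<psi> u) = s u"
proof -
  have "\<forall>k. \<exists>h. bij_betw h {u \<in> U. s u = k} {v \<in> W. t v = k}"
    using assms by (auto intro!: finite_same_card_bij)
  then obtain h where h: "\<And>k. bij_betw (h k) {u \<in> U. s u = k} {v \<in> W. t v = k}"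
    by metis
  define \<psi> where "\<psi> u = h (s u) u" for u
  have fiber: "bij_betw \<psi> {u \<in> U. s u = k} {v \<in> W. t v = k}" for k
    using h[of k] by (rule bij_betw_cong[THEN iffD1, rotated]) (simp add: \<psi>_def)
  have "bij_betw \<psi> (\<Union>k. {u \<in> U. s u = k}) (\<Union>k. {v \<in> W. t v = k})"
    by (rule bij_betw_UNION_disjoint) (use fiber in \<open>auto simp: disjoint_family_on_def\<close>)
  moreover have "(\<Union>k. {u \<in> U. s u = k}) = U" "(\<Union>k. {v \<in> W. t v = k}) = W"
    by auto
  moreover have "t (\<psi> u) = s u" if "u \<in> U" for u
    using bij_betwE[OF fiber[of "s u"]] that by blast
  ultimately show ?thesis
    using that by metis
qed

lemma partial_embedding_if_signature_preserving_bij: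
  assumes "\<forall>g\<in>F. M g \<in> EH" "bij_betw \<psi> (\<Union>F) (\<Union>(M ` F))"
    and signature: "\<forall>u\<in>\<Union>F. incidence_signature F M LH (\<psi> u) = incidence_signature F id Lq u"
  shows "partial_embedding F Lq EH LH M"
proof -
  have incident: "\<psi> u \<in> M g \<longleftrightarrow> u \<in> g" if "u \<in> \<Union>F" "g \<in> F" for u g
  proof -
    have "incidence_signature F M LH (\<psi> u) = incidence_signature F id Lq u"
      using signature \<open>u \<in> \<Union>F\<close> by blast
    then have "{g \<in> F. \<psi> u \<in> M g} = {g \<in> F. u \<in> g}"
      by (simp add: incidence_signature_def)
    then show ?thesis
      using \<open>g \<in> F\<close> by blast
  qed
  have "\<psi> ` g = M g" if "g \<in> F" for g
  proof
    show "\<psi> ` g \<subseteq> M g"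
      using incident that by blast
    show "M g \<subseteq> \<psi> ` g"
    proof
      fix v
      assume "v \<in> M g"
      then have "v \<in> \<psi> ` \<Union>F"
        using bij_betw_imp_surj_on[OF assms(2)] that by blast
      then obtain u where "u \<in> \<Union>F" "v = \<psi> u"
        by blast
      then have "u \<in> g"
        using incident[of u g] \<open>v \<in> M g\<close> that by simp
      then show "v \<in> \<psi> ` g"
        using \<open>v = \<psi> u\<close> by blast
    qed
  qed
  moreover have "\<forall>u\<in>\<Union>F. LH (\<psi> u) = Lq u"
    using signature by (simp add: incidence_signature_def)
  ultimately show ?thesis
    unfolding partial_embedding_def using assms(1) bij_betw_imp_inj_on[OF assms(2)] by blast
qed

lemma partial_embedding_if_card_signature_class_eq:
  assumes "\<forall>g\<in>F. M g \<in> EH" "finite (\<Union>F)" "finite (\<Union>(M ` F))"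
    and "\<And>k. card (signature_class F id Lq k) = card (signature_class F M LH k)"
  shows "partial_embedding F Lq EH LH M"
proof -
  have "card {u \<in> \<Union>F. incidence_signature F id Lq u = k} =
        card {v \<in> \<Union>(M ` F). incidence_signature F M LH v = k}" for k
    using assms(4)[of k] by (simp add: signature_class_def)
  then obtain \<psi> where "bij_betw \<psi> (\<Union>F) (\<Union>(M ` F))"
    "\<forall>u\<in>\<Union>F. incidence_signature F M LH (\<psi> u) = incidence_signature F id Lq u"
    using bij_betw_preserving_fibers[OF assms(2,3)] by blast
  then show ?thesis
    using partial_embedding_if_signature_preserving_bij[OF assms(1)] by blast
qed

theorem theorem4:
  fixes Vq :: "'a set" and Eq :: "'a set set" and Lq :: "'a \<Rightarrow> 'l"
    and VH :: "'b set" and EH :: "'b set set" and LH :: "'b \<Rightarrow> 'l"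
    and pos :: "'a set \<Rightarrow> nat" and E' :: "'a set set" and M :: "'a set \<Rightarrow> 'b set"
    and e :: "'a set" and f :: "'b set"
  assumes "hypergraph Vq Eq Lq" and "hypergraph VH EH LH"
    and "inj_on pos Eq" and "pos ` Eq \<subseteq> {..<card Eq}"
    and "E' \<subseteq> Eq"
    and "partial_embedding E' Lq EH LH M"
    and "e \<in> Eq - E'" and "f \<in> EH"
    and "\<forall>(b::nat) l. bit b (pos e) \<longrightarrow>
           cell_q pos (insert e E') Lq b l = cell_H pos (insert e E') (M(e := f)) LH b l"
  shows "partial_embedding (insert e E') Lq EH LH (M(e := f))"
proof -
  let ?F = "insert e E'" and ?M' = "M(e := f)"
  have "?F \<subseteq> Eq" "e \<notin> E'"
    using assms(5,7) by auto
  have fin_F: "finite ?F"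
    using hypergraph_finite_edges[OF assms(1)] \<open>?F \<subseteq> Eq\<close> by (rule finite_subset[rotated])
  have inj_F: "inj_on pos ?F"
    using assms(3) \<open>?F \<subseteq> Eq\<close> by (rule inj_on_subset)
  have M'_EH: "\<forall>g\<in>?F. ?M' g \<in> EH"
    using assms(6,8) unfolding partial_embedding_def by auto
  have new_cells: "card (signature_class ?F id Lq (S, l)) = card (signature_class ?F ?M' LH (S, l))"
    if "S \<subseteq> ?F" "e \<in> S" for S l
    using card_signature_class_eq_if_cells_eq[OF inj_F fin_F that assms(9)] .
  have "card (signature_class ?F id Lq k) = card (signature_class ?F ?M' LH k)" for k
    using hypergraph_finite_Union[OF assms(1,5)]
    by (rule card_signature_class_extension[OF assms(6) \<open>e \<notin> E'\<close> _ new_cells])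
  moreover have "finite (\<Union>?F)"
    using hypergraph_finite_Union[OF assms(1) \<open>?F \<subseteq> Eq\<close>] .
  moreover have "finite (\<Union>(?M' ` ?F))"
    using M'_EH by (intro hypergraph_finite_Union[OF assms(2)]) blast
  ultimately show ?thesis
    using partial_embedding_if_card_signature_class_eq[OF M'_EH] by blast
qed

end
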